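(* Let $\widetilde C$ be an $\mathcal S$-complex over $R$. Then the negative suspension $\Sigma^{-1}\widetilde C$ is $\mathcal S$-chain homotopy equivalent to $\widetilde C\otimes\widetilde{\mathcal O}(-1)$.
   Context: Let $R$ be a commutative ring. Graded modules are $\mathbb Z$-graded; $V[i]_j=V_{i+j}$; differentials have degree $-1$; $\epsilon$ is the sign map ($(-1)^i$ on degree $i$). An $\mathcal S$-complex over $R$ is a chain complex $(\widetilde C,\widetilde d)$ of finitely generated free graded $R$-modules with a graded decomposition $\widetilde C=C\oplus C[-1]\oplus\mathsf R$ in which $\widetilde d=\begin{pmatrix} d&0&0\\ v&-d&\delta_2\\ \delta_1&0&r\end{pmatrix}$. Let $\chi$ be the degree $1$ map sending $C$ identically onto $C[-1]$ and zero on $C[-1]\oplus\mathsf R$. A morphism is a degree $0$ chain map $\widetilde\lambda$ with $\chi'\widetilde\lambda=\widetilde\lambda\chi$; an $\mathcal S$-chain homotopy between morphisms is a degree $1$ map $\widetilde K$ with $\chi'\widetilde K+\widetilde K\chi=0$ and $\widetilde d'\widetilde K+\widetilde K\widetilde d$ equal to their difference; an $\mathcal S$-chain homotopy equivalence is a pair of morphisms whose composites are $\mathcal S$-chain homotopic to identities. The tensor product $\widetilde C\otimes\widetilde C'$ is the tensor product chain complex (differential $\widetilde d\otimes1+\epsilon\otimes\widetilde d'$) with $\chi^\otimes=\chi\otimes1+\epsilon\otimes\chi'$, an $\mathcal S$-complex with reducible summand $\mathsf R\otimes\mathsf R'$. The negative suspension $\Sigma^{-1}\widetilde C$ is the $\mathcal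 S$-complex $C_{\Sigma^{-1}}\oplus C_{\Sigma^{-1}}[-1]\oplus\mathsf R$ with $C_{\Sigma^{-1}}=C[2]\oplus\mathsf R[2]$ and, with respect to the ordered summands $C[2],\mathsf R[2],C[1],\mathsf R[1],\mathsf R$, differential $\widetilde d_{\Sigma^{-1}}=\begin{pmatrix} d&0&0&0&0\\ \delta_1&r&0&0&0\\ v&\delta_2&-d&0&0\\ 0&0&-\delta_1&-r&1\\ \delta_1v&\delta_1\delta_2&0&0&r\end{pmatrix}$ (the entry $1$ is the identity $\mathsf R\to\mathsf R[1]$). $\widetilde{\mathcal O}(-1)$ is the $\mathcal S$-complex with $C=R$ in degree $-2$, $\mathsf R=R$ in degree $0$, $d=v=\delta_1=r=0$ and $\delta_2:\mathsf R\to C$ the identity of $R$. *)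

theory Defs
  imports "Jordan_Normal_Form.Matrix"
begin

text \<open>Finitely generated free graded R-modules are represented by a homogeneous basis,
  i.e. by the list of degrees of the basis elements; graded maps are matrices with respect
  to these bases (column = source basis element, row = target basis element).
  Shift convention: V[i]_j = V_(i+j), so a basis element of degree n in V has degree n - i
  in V[i].\<close>

definition shift_degs :: "int \<Rightarrow> int list \<Rightarrow> int list" where
  "shift_degs i ds = map (\<lambda>n. n - i) ds"

definition graded_map :: "int list \<Rightarrow> int list \<Rightarrow> int \<Rightarrow> 'a::zero mat \<Rightarrow> bool" where
  "graded_map src tgt k M \<longleftrightarrow>
     M \<in> carrier_mat (length tgt) (length src) \<and>
     (\<forall>i < length tgt. \<forall>j < length src. M $$ (i, j) \<noteq> 0 \<longrightarrow> tgt ! i = src ! j + k)"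

record 'a cxchi =
  degs :: "int list"
  dif :: "'a mat"
  chi :: "'a mat"

definition row_blocks :: "'a::zero mat \<Rightarrow> 'a mat \<Rightarrow> 'a mat" where
  "row_blocks A B = four_block_mat A B (0\<^sub>m 0 (dim_col A)) (0\<^sub>m 0 (dim_col B))"

definition block3 :: "'a::zero mat \<Rightarrow> 'a mat \<Rightarrow> 'a mat \<Rightarrow> 'a mat \<Rightarrow> 'a mat \<Rightarrow> 'a mat
    \<Rightarrow> 'a mat \<Rightarrow> 'a mat \<Rightarrow> 'a mat \<Rightarrow> 'a mat" where
  "block3 A11 A12 A13 A21 A22 A23 A31 A32 A33 =
     four_block_mat (four_block_mat A11 A12 A21 A22) (A13 @\<^sub>r A23)
                    (row_blocks A31 A32) A33"

text \<open>The total complex C~ = C \<oplus> C[-1] \<oplus> R of S-complex data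
  (C has basis degrees dc, R has basis degrees dr).\<close>
definition S_tot :: "int list \<Rightarrow> int list \<Rightarrow> 'a::comm_ring_1 mat \<Rightarrow> 'a mat \<Rightarrow> 'a mat
    \<Rightarrow> 'a mat \<Rightarrow> 'a mat \<Rightarrow> 'a cxchi" where
  "S_tot dc dr d v \<delta>1 \<delta>2 r =
    (let nc = length dc; nr = length dr in
     \<lparr> degs = dc @ shift_degs (-1) dc @ dr,
       dif = block3 d (0\<^sub>m nc nc) (0\<^sub>m nc nr)
                    v (- d) \<delta>2
                    \<delta>1 (0\<^sub>m nr nc) r,
       chi = block3 (0\<^sub>m nc nc) (0\<^sub>m nc nc) (0\<^sub>m nc nr)
                    (1\<^sub>m nc) (0\<^sub>m nc nc) (0\<^sub>m nc nr)
                    (0\<^sub>m nr nc) (0\<^sub>m nr nc) (0\<^sub>m nr nr) \<rparr>)"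

definition is_S_complex :: "int list \<Rightarrow> int list \<Rightarrow> 'a::comm_ring_1 mat \<Rightarrow> 'a mat
    \<Rightarrow> 'a mat \<Rightarrow> 'a mat \<Rightarrow> 'a mat \<Rightarrow> bool" where
  "is_S_complex dc dr d v \<delta>1 \<delta>2 r \<longleftrightarrow>
     (let nc = length dc; nr = length dr; X = S_tot dc dr d v \<delta>1 \<delta>2 r in
      d \<in> carrier_mat nc nc \<and> v \<in> carrier_mat nc nc \<and> \<delta>2 \<in> carrier_mat nc nr \<and>
      \<delta>1 \<in> carrier_mat nr nc \<and> r \<in> carrier_mat nr nr \<and>
      graded_map (degs X) (degs X) (-1) (dif X) \<and> dif X * dif X = 0\<^sub>m (length (degs X)) (length (degs X)))"

text \<open>Negative suspension: the S-complex with C_Sigma = C[2] \<oplus> R[2], reducible part R,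
  and the displayed differential w.r.t. C[2], R[2], C[1], R[1], R.\<close>
definition neg_susp :: "int list \<Rightarrow> int list \<Rightarrow> 'a::comm_ring_1 mat \<Rightarrow> 'a mat \<Rightarrow> 'a mat
    \<Rightarrow> 'a mat \<Rightarrow> 'a mat \<Rightarrow> 'a cxchi" where
  "neg_susp dc dr d v \<delta>1 \<delta>2 r =
    (let nc = length dc; nr = length dr in
     S_tot (shift_degs 2 dc @ shift_degs 2 dr) dr
       (four_block_mat d (0\<^sub>m nc nr) \<delta>1 r)
       (four_block_mat v \<delta>2 (0\<^sub>m nr nc) (0\<^sub>m nr nr))
       (row_blocks (\<delta>1 * v) (\<delta>1 * \<delta>2))
       ((0\<^sub>m nc nr) @\<^sub>r (1\<^sub>m nr))
       r)"

definition O_minus1 :: "'a::comm_ring_1 cxchi" where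
  "O_minus1 = S_tot [-2] [0] (0\<^sub>m 1 1) (0\<^sub>m 1 1) (0\<^sub>m 1 1) (1\<^sub>m 1) (0\<^sub>m 1 1)"

definition kron :: "'a::comm_ring_1 mat \<Rightarrow> 'a mat \<Rightarrow> 'a mat" where
  "kron A B = mat (dim_row A * dim_row B) (dim_col A * dim_col B)
     (\<lambda>(i, j). A $$ (i div dim_row B, j div dim_col B) * B $$ (i mod dim_row B, j mod dim_col B))"

definition sign_mat :: "int list \<Rightarrow> 'a::comm_ring_1 mat" where
  "sign_mat ds = mat_diag (length ds) (\<lambda>i. if even (ds ! i) then 1 else -1)"

text \<open>Tensor product; basis element (i,j) has index i * n2 + j.\<close>
definition tensor_cx :: "'a::comm_ring_1 cxchi \<Rightarrow> 'a cxchi \<Rightarrow> 'a cxchi" where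
  "tensor_cx X Y =
    \<lparr> degs = concat (map (\<lambda>a. map (\<lambda>b. a + b) (degs Y)) (degs X)),
      dif = kron (dif X) (1\<^sub>m (length (degs Y))) + kron (sign_mat (degs X)) (dif Y),
      chi = kron (chi X) (1\<^sub>m (length (degs Y))) + kron (sign_mat (degs X)) (chi Y) \<rparr>"

definition S_morphism :: "'a::comm_ring_1 cxchi \<Rightarrow> 'a cxchi \<Rightarrow> 'a mat \<Rightarrow> bool" where
  "S_morphism X Y L \<longleftrightarrow>
     graded_map (degs X) (degs Y) 0 L \<and> dif Y * L = L * dif X \<and> chi Y * L = L * chi X"

definition S_homotopy :: "'a::comm_ring_1 cxchi \<Rightarrow> 'a cxchi \<Rightarrow> 'a mat \<Rightarrow> 'a mat \<Rightarrow> 'a mat \<Rightarrow> bool" where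
  "S_homotopy X Y L L' K \<longleftrightarrow>
     graded_map (degs X) (degs Y) 1 K \<and>
     chi Y * K + K * chi X = 0\<^sub>m (length (degs Y)) (length (degs X)) \<and>
     dif Y * K + K * dif X = L - L'"

definition S_htpy_equiv :: "'a::comm_ring_1 cxchi \<Rightarrow> 'a cxchi \<Rightarrow> bool" where
  "S_htpy_equiv X Y \<longleftrightarrow>
     (\<exists>F G. S_morphism X Y F \<and> S_morphism Y X G \<and>
        (\<exists>K. S_homotopy X X (G * F) (1\<^sub>m (length (degs X))) K) \<and>
        (\<exists>K. S_homotopy Y Y (F * G) (1\<^sub>m (length (degs Y))) K))"

end

theory Submission
  imports Defs
begin

(* As a graded module, C~ (x) O~(-1) consists of three copies of C~, indexed by the basis vectors
   e0, e1, e2 of O~(-1) (of degrees -2, -1, 0), and its differential and chi are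
   d~ (x) 1 + eps (x) E12 and chi (x) 1 + eps (x) E10, with E_ij the matrix units.  A map into or out
   of the tensor product is therefore a triple of maps into or out of C~, and the two morphisms
   F : Sigma^-1 C~ -> C~ (x) O~(-1) and G back are explicit block matrices built from identities,
   v, delta1, delta2 and the sign maps.  G F is the identity on the nose, and K, which only maps the
   e0- and e1-components to the e2-component, is an S-chain homotopy from F G to the identity.
   Block by block, every required identity reduces to the components d v = v d + delta2 delta1,
   d delta2 = delta2 r and r delta1 = - delta1 d of d~^2 = 0, and to the sign map commuting with
   maps of even degree and anticommuting with maps of odd degree. *)

section \<open>Block decompositions of matrices\<close>

definition offset :: "nat list \<Rightarrow> nat \<Rightarrow> nat" where
  "offset ns i = sum_list (take i ns)"

lemma offset_0 [simp]: "offset ns 0 = 0"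
  by (simp add: offset_def)

lemma offset_Cons_Suc [simp]: "offset (n # ns) (Suc i) = n + offset ns i"
  by (simp add: offset_def)

lemma offset_Cons_numeral [simp]: "offset (n # ns) (numeral k) = n + offset ns (pred_numeral k)"
  by (simp add: offset_def)

lemma offset_add_less_sum_list:
  "i < length ns \<Longrightarrow> x < ns ! i \<Longrightarrow> offset ns i + x < sum_list ns"
proof (induction ns arbitrary: i)
  case (Cons n ns)
  then show ?case by (cases i) fastforce+
qed simp

fun locate :: "nat list \<Rightarrow> nat \<Rightarrow> nat \<times> nat" where
  "locate [] p = (0, p)"
| "locate (n # ns) p = (if p < n then (0, p) else apfst Suc (locate ns (p - n)))"

lemma locate_offset: "i < length ns \<Longrightarrow> x < ns ! i \<Longrightarrow> locate ns (offset ns i + x) = (i, x)"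
proof (induction ns arbitrary: i)
  case (Cons n ns)
  then show ?case by (cases i) auto
qed simp

lemma locate_less_sum_list:
  assumes "p < sum_list ns" "locate ns p = (i, x)"
  shows "i < length ns \<and> x < ns ! i \<and> offset ns i + x = p"
  using assms
proof (induction ns arbitrary: p i)
  case (Cons n ns)
  show ?case
  proof (cases "p < n")
    case False
    then obtain i' where "i = Suc i'" "locate ns (p - n) = (i', x)"
      using Cons.prems(2) by (cases "locate ns (p - n)") auto
    moreover have "p - n < sum_list ns" using Cons.prems(1) False by simp
    ultimately show ?thesis using Cons.IH[of "p - n" i'] False by auto
  qed (use Cons.prems in auto)
qed simp

lemma offset_eq_offset_iff:
  "i < length ns \<Longrightarrow> x < ns ! i \<Longrightarrow> j < length ns \<Longrightarrow> y < ns ! j \<Longrightarrow>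
   offset ns i + x = offset ns j + y \<longleftrightarrow> i = j \<and> x = y"
  by (metis locate_offset prod.inject)

lemma nth_concat_offset:
  "i < length ts \<Longrightarrow> x < length (ts ! i) \<Longrightarrow> concat ts ! (offset (map length ts) i + x) = ts ! i ! x"
proof (induction ts arbitrary: i)
  case (Cons t ts)
  then show ?case by (cases i) (auto simp: nth_append)
qed simp

lemma sum_lessThan_add: "(\<Sum>z<m + n. g z) = (\<Sum>z<m. g z) + (\<Sum>z<n. g (m + z))" for m n :: nat
  by (induction n) (simp_all add: add.assoc)

lemma sum_lessThan_sum_list:
  "(\<Sum>z<sum_list ns. g z) = (\<Sum>i<length ns. \<Sum>x<ns ! i. g (offset ns i + x))"
proof (induction ns arbitrary: g)
  case (Cons n ns)
  then show ?case
    by (simp add: sum_lessThan_add sum.lessThan_Suc_shift add.assoc del: sum.lessThan_Suc)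
qed simp

lemma sum_lessThan_mult: "(\<Sum>z<k * c. g z) = (\<Sum>l<c. \<Sum>w<k. g (w * c + l))" for k c :: nat
proof (induction k)
  case (Suc k)
  have "(\<Sum>z<Suc k * c. g z) = (\<Sum>z<k * c + c. g z)" by (simp add: add.commute)
  also have "\<dots> = (\<Sum>z<k * c. g z) + (\<Sum>l<c. g (k * c + l))" by (rule sum_lessThan_add)
  finally show ?case by (simp add: Suc.IH sum.distrib add.commute)
qed simp

fun mat_sum :: "'a::plus mat list \<Rightarrow> 'a mat" where
  "mat_sum [] = undefined"
| "mat_sum [A] = A"
| "mat_sum (A # B # As) = A + mat_sum (B # As)"

lemma mat_sum_carrier:
  "As \<noteq> [] \<Longrightarrow> \<forall>A\<in>set As. A \<in> carrier_mat n m \<Longrightarrow> mat_sum As \<in> carrier_mat n m"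
  by (induction As rule: mat_sum.induct) auto

lemma index_mat_sum:
  "As \<noteq> [] \<Longrightarrow> \<forall>A\<in>set As. A \<in> carrier_mat n m \<Longrightarrow> x < n \<Longrightarrow> y < m \<Longrightarrow>
   mat_sum As $$ (x, y) = sum_list (map (\<lambda>A. A $$ (x, y)) As)"
proof (induction As rule: mat_sum.induct)
  case (3 A B As)
  then show ?case using mat_sum_carrier[of "B # As" n m] by auto
qed auto

definition submat_at :: "nat \<Rightarrow> nat \<Rightarrow> nat \<Rightarrow> nat \<Rightarrow> 'a mat \<Rightarrow> 'a mat" where
  "submat_at r c n m M = mat n m (\<lambda>(x, y). M $$ (r + x, c + y))"

definition block :: "nat list \<Rightarrow> nat list \<Rightarrow> 'a mat \<Rightarrow> nat \<Rightarrow> nat \<Rightarrow> 'a mat" where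
  "block ns ms M i j = submat_at (offset ns i) (offset ms j) (ns ! i) (ms ! j) M"

definition of_blocks :: "nat list \<Rightarrow> nat list \<Rightarrow> (nat \<Rightarrow> nat \<Rightarrow> 'a mat) \<Rightarrow> 'a mat" where
  "of_blocks ns ms B = mat (sum_list ns) (sum_list ms)
     (\<lambda>(p, q). case locate ns p of (i, x) \<Rightarrow> case locate ms q of (j, y) \<Rightarrow> B i j $$ (x, y))"

definition sparse_blocks ::
    "nat list \<Rightarrow> nat list \<Rightarrow> ((nat \<times> nat) \<times> 'a::zero mat) list \<Rightarrow> nat \<Rightarrow> nat \<Rightarrow> 'a mat" where
  "sparse_blocks ns ms bs i j = (case map_of bs (i, j) of Some A \<Rightarrow> A | None \<Rightarrow> 0\<^sub>m (ns ! i) (ms ! j))"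

abbreviation sparse_block_mat :: "nat list \<Rightarrow> nat list \<Rightarrow> ((nat \<times> nat) \<times> 'a::zero mat) list \<Rightarrow> 'a mat" where
  "sparse_block_mat ns ms bs \<equiv> of_blocks ns ms (sparse_blocks ns ms bs)"

lemma dim_submat_at [simp]: "dim_row (submat_at r c n m M) = n" "dim_col (submat_at r c n m M) = m"
  by (simp_all add: submat_at_def)

lemma dim_block [simp]: "dim_row (block ns ms M i j) = ns ! i" "dim_col (block ns ms M i j) = ms ! j"
  by (simp_all add: block_def)

lemma dim_of_blocks [simp]:
  "dim_row (of_blocks ns ms B) = sum_list ns" "dim_col (of_blocks ns ms B) = sum_list ms"
  by (simp_all add: of_blocks_def)

lemma index_block:
  "x < ns ! i \<Longrightarrow> y < ms ! j \<Longrightarrow> block ns ms M i j $$ (x, y) = M $$ (offset ns i + x, offset ms j + y)"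
  by (simp add: block_def submat_at_def)

lemma block_ext:
  assumes "dim_row M = sum_list ns" "dim_col M = sum_list ms" "dim_row N = sum_list ns" "dim_col N = sum_list ms"
    and "\<forall>i<length ns. \<forall>j<length ms. block ns ms M i j = block ns ms N i j"
  shows "M = N"
proof (rule eq_matI)
  fix p q assume "p < dim_row N" "q < dim_col N"
  then have "p < sum_list ns" "q < sum_list ms" using assms(3,4) by auto
  moreover obtain i x j y where "locate ns p = (i, x)" "locate ms q = (j, y)" by fastforce
  ultimately have i: "i < length ns" "x < ns ! i" "p = offset ns i + x"
    and j: "j < length ms" "y < ms ! j" "q = offset ms j + y"
    using locate_less_sum_list by metis+
  have "block ns ms M i j $$ (x, y) = block ns ms N i j $$ (x, y)" using assms(5) i j by simp
  then show "M $$ (p, q) = N $$ (p, q)" using i j by (simp add: index_block)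
qed (use assms in auto)

lemma block_of_blocks [simp]:
  "i < length ns \<Longrightarrow> j < length ms \<Longrightarrow> dim_row (B i j) = ns ! i \<Longrightarrow> dim_col (B i j) = ms ! j \<Longrightarrow>
   block ns ms (of_blocks ns ms B) i j = B i j"
  by (rule eq_matI) (auto simp: index_block of_blocks_def locate_offset offset_add_less_sum_list)

lemma eq_of_blocksI:
  assumes "dim_row M = sum_list ns" "dim_col M = sum_list ms"
    and blocks: "\<forall>i<length ns. \<forall>j<length ms. block ns ms M i j = B i j"
  shows "M = of_blocks ns ms B"
proof (rule block_ext)
  show "\<forall>i<length ns. \<forall>j<length ms. block ns ms M i j = block ns ms (of_blocks ns ms B) i j"
  proof (intro allI impI)
    fix i j assume ij: "i < length ns" "j < length ms"
    then have "dim_row (B i j) = ns ! i" "dim_col (B i j) = ms ! j"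
      using blocks by (metis dim_block)+
    then show "block ns ms M i j = block ns ms (of_blocks ns ms B) i j" using blocks ij by simp
  qed
qed (simp_all add: assms(1,2))

lemma block_mult:
  assumes "dim_row M = sum_list ns" "dim_col M = sum_list ks" "dim_row N = sum_list ks" "dim_col N = sum_list ms"
    and i: "i < length ns" and j: "j < length ms" and ks: "ks \<noteq> []"
  shows "block ns ms (M * N) i j = mat_sum (map (\<lambda>l. block ns ks M i l * block ks ms N l j) [0..<length ks])"
    (is "_ = mat_sum ?Ps")
proof -
  have M: "M \<in> carrier_mat (sum_list ns) (sum_list ks)" and N: "N \<in> carrier_mat (sum_list ks) (sum_list ms)"
    using assms(1-4) by (auto intro: carrier_matI)
  have car: "\<forall>P\<in>set ?Ps. P \<in> carrier_mat (ns ! i) (ms ! j)" by auto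
  show ?thesis
  proof (rule eq_matI)
    fix x y assume "x < dim_row (mat_sum ?Ps)" "y < dim_col (mat_sum ?Ps)"
    then have x: "x < ns ! i" and y: "y < ms ! j" using mat_sum_carrier[OF _ car] ks by auto
    have "block ns ms (M * N) i j $$ (x, y)
        = (\<Sum>z<sum_list ks. M $$ (offset ns i + x, z) * N $$ (z, offset ms j + y))"
      using M N x y offset_add_less_sum_list[OF i x] offset_add_less_sum_list[OF j y]
      by (simp add: index_block scalar_prod_def atLeast0LessThan)
    also have "\<dots> = (\<Sum>l<length ks. (block ns ks M i l * block ks ms N l j) $$ (x, y))"
      using x y by (simp add: sum_lessThan_sum_list index_block scalar_prod_def atLeast0LessThan)
    also have "\<dots> = mat_sum ?Ps $$ (x, y)"
      using ks x y car by (simp add: index_mat_sum sum_list_sum_nth atLeast0LessThan del: index_mult_mat)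
    finally show "block ns ms (M * N) i j $$ (x, y) = mat_sum ?Ps $$ (x, y)" .
  qed (use mat_sum_carrier[OF _ car] ks in auto)
qed

lemma block_of_blocks_mult [simp]:
  "dim_row N = sum_list ks \<Longrightarrow> dim_col N = sum_list ms \<Longrightarrow> i < length ns \<Longrightarrow> j < length ms \<Longrightarrow>
   ks \<noteq> [] \<Longrightarrow> block ns ms (of_blocks ns ks B * N) i j
     = mat_sum (map (\<lambda>l. block ns ks (of_blocks ns ks B) i l * block ks ms N l j) [0..<length ks])"
  by (rule block_mult) simp_all

lemma block_add [simp]:
  "dim_row B = sum_list ns \<Longrightarrow> dim_col B = sum_list ms \<Longrightarrow> i < length ns \<Longrightarrow> j < length ms \<Longrightarrow>
   block ns ms (A + B) i j = block ns ms A i j + block ns ms B i j"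
  by (rule eq_matI) (auto simp: index_block offset_add_less_sum_list)

lemma block_uminus [simp]:
  "dim_row A = sum_list ns \<Longrightarrow> dim_col A = sum_list ms \<Longrightarrow> i < length ns \<Longrightarrow> j < length ms \<Longrightarrow>
   block ns ms (- A) i j = - block ns ms A i j"
  by (rule eq_matI) (auto simp: index_block offset_add_less_sum_list)

lemma block_minus [simp]:
  "dim_row A = sum_list ns \<Longrightarrow> dim_col A = sum_list ms \<Longrightarrow> dim_row B = sum_list ns \<Longrightarrow>
   dim_col B = sum_list ms \<Longrightarrow> i < length ns \<Longrightarrow> j < length ms \<Longrightarrow>
   block ns ms (A - B) i j = block ns ms A i j - block ns ms B i j"
  by (rule eq_matI) (auto simp: index_block offset_add_less_sum_list)

lemma block_zero [simp]:
  "p = sum_list ns \<Longrightarrow> q = sum_list ms \<Longrightarrow> i < length ns \<Longrightarrow> j < length ms \<Longrightarrow>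
   block ns ms (0\<^sub>m p q) i j = 0\<^sub>m (ns ! i) (ms ! j)"
  by (rule eq_matI) (auto simp: index_block offset_add_less_sum_list)

lemma block_one [simp]:
  assumes "p = sum_list ns" "i < length ns" "j < length ns"
  shows "block ns ns (1\<^sub>m p) i j = (if i = j then 1\<^sub>m (ns ! i) else 0\<^sub>m (ns ! i) (ns ! j))"
proof (rule eq_matI)
  fix x y assume "x < dim_row (if i = j then 1\<^sub>m (ns ! i) else 0\<^sub>m (ns ! i) (ns ! j) :: 'a mat)"
    "y < dim_col (if i = j then 1\<^sub>m (ns ! i) else 0\<^sub>m (ns ! i) (ns ! j) :: 'a mat)"
  then have x: "x < ns ! i" and y: "y < ns ! j" by (simp_all split: if_splits)
  then show "block ns ns (1\<^sub>m p) i j $$ (x, y)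
      = (if i = j then 1\<^sub>m (ns ! i) else 0\<^sub>m (ns ! i) (ns ! j) :: 'a mat) $$ (x, y)"
    using assms offset_eq_offset_iff[OF assms(2) x assms(3) y]
    by (cases "i = j") (simp_all add: index_block offset_add_less_sum_list)
qed simp_all

lemma submat_at_self [simp]: "dim_row M = n \<Longrightarrow> dim_col M = m \<Longrightarrow> submat_at 0 0 n m M = M"
  by (rule eq_matI) (auto simp: submat_at_def)

lemma submat_at_zero [simp]: "r + n \<le> p \<Longrightarrow> c + m \<le> q \<Longrightarrow> submat_at r c n m (0\<^sub>m p q) = 0\<^sub>m n m"
  by (rule eq_matI) (auto simp: submat_at_def)

lemma submat_at_one [simp]:
  "r + n \<le> k \<Longrightarrow> submat_at r r n n (1\<^sub>m k) = 1\<^sub>m n"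
  "r + n \<le> c \<Longrightarrow> c + m \<le> k \<Longrightarrow> submat_at r c n m (1\<^sub>m k) = 0\<^sub>m n m"
  "c + m \<le> r \<Longrightarrow> r + n \<le> k \<Longrightarrow> submat_at r c n m (1\<^sub>m k) = 0\<^sub>m n m"
  by (auto simp: submat_at_def intro!: eq_matI)

lemma submat_at_uminus [simp]:
  "r + n \<le> dim_row M \<Longrightarrow> c + m \<le> dim_col M \<Longrightarrow> submat_at r c n m (- M) = - submat_at r c n m M"
  by (rule eq_matI) (auto simp: submat_at_def)

lemma submat_at_four_block_mat [simp]:
  assumes "r + n \<le> dim_row A + dim_row D" "c + m \<le> dim_col A + dim_col D"
  shows "r + n \<le> dim_row A \<Longrightarrow> c + m \<le> dim_col A \<Longrightarrow>
      submat_at r c n m (four_block_mat A B C D) = submat_at r c n m A"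
    and "r + n \<le> dim_row A \<Longrightarrow> dim_col A \<le> c \<Longrightarrow>
      submat_at r c n m (four_block_mat A B C D) = submat_at r (c - dim_col A) n m B"
    and "dim_row A \<le> r \<Longrightarrow> c + m \<le> dim_col A \<Longrightarrow>
      submat_at r c n m (four_block_mat A B C D) = submat_at (r - dim_row A) c n m C"
    and "dim_row A \<le> r \<Longrightarrow> dim_col A \<le> c \<Longrightarrow>
      submat_at r c n m (four_block_mat A B C D) = submat_at (r - dim_row A) (c - dim_col A) n m D"
  using assms by (auto simp: submat_at_def intro!: eq_matI)

text \<open>The block computations below first rewrite with \<open>All_less_expand\<close> alone: expanding the
  bounded quantifiers over block indices before anything else keeps the simplifier from working
  on symbolic indices.\<close>

lemma all_less_length_Nil: "(\<forall>i<length []. P i) \<longleftrightarrow> True"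
  by simp

lemma all_less_length_Cons: "(\<forall>i<length (x # xs). P i) \<longleftrightarrow> P 0 \<and> (\<forall>i<length xs. P (Suc i))"
  by (simp add: All_less_Suc2)

lemma All_less_one: "(\<forall>i<1. P i) \<longleftrightarrow> P (0::nat)"
  by auto

lemma All_less_numeral: "(\<forall>i<numeral k. P i) \<longleftrightarrow> P (pred_numeral k) \<and> (\<forall>i<pred_numeral k. P i)"
  by (simp add: numeral_eq_Suc All_less_Suc)

lemmas All_less_expand = all_less_length_Nil all_less_length_Cons All_less_one All_less_numeral
  pred_numeral_simps BitM.simps numeral_One

section \<open>Coefficients with respect to a Kronecker factor\<close>

text \<open>A matrix \<open>M\<close> whose dimensions are multiples of \<open>a\<close> and \<open>b\<close> is the sum over \<open>i < a\<close>, \<open>j < b\<close> of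
  \<open>kron (kron_coeff a b M i j) (mat_unit a b i j)\<close>.\<close>

definition kron_coeff :: "nat \<Rightarrow> nat \<Rightarrow> 'a mat \<Rightarrow> nat \<Rightarrow> nat \<Rightarrow> 'a mat" where
  "kron_coeff a b M i j = mat (dim_row M div a) (dim_col M div b) (\<lambda>(x, y). M $$ (x * a + i, y * b + j))"

definition mat_unit :: "nat \<Rightarrow> nat \<Rightarrow> nat \<Rightarrow> nat \<Rightarrow> 'a::zero_neq_one mat" where
  "mat_unit n m i j = mat n m (\<lambda>(x, y). if x = i \<and> y = j then 1 else 0)"

lemma dim_kron_coeff [simp]:
  "dim_row (kron_coeff a b M i j) = dim_row M div a" "dim_col (kron_coeff a b M i j) = dim_col M div b"
  by (simp_all add: kron_coeff_def)

lemma dim_kron [simp]: "dim_row (kron A B) = dim_row A * dim_row B" "dim_col (kron A B) = dim_col A * dim_col B"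
  by (simp_all add: kron_def)

lemma dim_mat_unit [simp]: "dim_row (mat_unit n m i j) = n" "dim_col (mat_unit n m i j) = m"
  by (simp_all add: mat_unit_def)

lemma index_mat_unit [simp]:
  "x < n \<Longrightarrow> y < m \<Longrightarrow> mat_unit n m i j $$ (x, y) = (if x = i \<and> y = j then 1 else 0)"
  by (simp add: mat_unit_def)

lemma mult_add_less_of_less_div: "x < n div a \<Longrightarrow> i < (a::nat) \<Longrightarrow> x * a + i < n"
proof -
  assume "x < n div a" "i < a"
  then have "x * a + i < (x + 1) * a" by simp
  also have "\<dots> \<le> n div a * a" using \<open>x < n div a\<close> by (intro mult_right_mono) auto
  also have "\<dots> \<le> n" by simp
  finally show ?thesis .
qed

lemma kron_coeff_ext:
  assumes "dim_row M = dim_row N" "dim_col M = dim_col N" "a dvd dim_row N" "b dvd dim_col N"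
    and "\<forall>i<a. \<forall>j<b. kron_coeff a b M i j = kron_coeff a b N i j"
  shows "M = N"
proof (rule eq_matI)
  fix p q assume pq: "p < dim_row N" "q < dim_col N"
  then have "0 < a" "0 < b" using assms(3,4) by (auto intro: ccontr)
  then have "p mod a < a" "q mod b < b" "p div a < dim_row N div a" "q div b < dim_col N div b"
    using pq assms(3,4) by (auto simp: div_less_iff_less_mult elim!: dvdE)
  then have "kron_coeff a b M (p mod a) (q mod b) $$ (p div a, q div b)
      = kron_coeff a b N (p mod a) (q mod b) $$ (p div a, q div b)"
    using assms by simp
  then show "M $$ (p, q) = N $$ (p, q)"
    using \<open>p div a < _\<close> \<open>q div b < _\<close> assms(1,2) by (simp add: kron_coeff_def)
qed (use assms in auto)

lemma kron_coeff_kron [simp]: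
  assumes "dim_row B = a" "dim_col B = b" "i < a" "j < b"
  shows "kron_coeff a b (kron A B) i j = B $$ (i, j) \<cdot>\<^sub>m A"
proof (rule eq_matI)
  fix x y assume "x < dim_row (B $$ (i, j) \<cdot>\<^sub>m A)" "y < dim_col (B $$ (i, j) \<cdot>\<^sub>m A)"
  then have "x < dim_row (kron A B) div a" "y < dim_col (kron A B) div b" using assms by auto
  then show "kron_coeff a b (kron A B) i j $$ (x, y) = (B $$ (i, j) \<cdot>\<^sub>m A) $$ (x, y)"
    using assms mult_add_less_of_less_div[of x _ a i] mult_add_less_of_less_div[of y _ b j]
    by (simp add: kron_coeff_def kron_def mult.commute)
qed (use assms in auto)

lemma kron_coeff_add [simp]:
  "dim_row A = dim_row B \<Longrightarrow> dim_col A = dim_col B \<Longrightarrow> i < a \<Longrightarrow> j < b \<Longrightarrow>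
   kron_coeff a b (A + B) i j = kron_coeff a b A i j + kron_coeff a b B i j"
  by (rule eq_matI) (auto simp: kron_coeff_def mult_add_less_of_less_div)

lemma kron_coeff_minus [simp]:
  "dim_row A = dim_row B \<Longrightarrow> dim_col A = dim_col B \<Longrightarrow> i < a \<Longrightarrow> j < b \<Longrightarrow>
   kron_coeff a b (A - B) i j = kron_coeff a b A i j - kron_coeff a b B i j"
  by (rule eq_matI) (auto simp: kron_coeff_def mult_add_less_of_less_div)

lemma kron_coeff_zero [simp]:
  "i < a \<Longrightarrow> j < b \<Longrightarrow> kron_coeff a b (0\<^sub>m p q) i j = 0\<^sub>m (p div a) (q div b)"
  by (rule eq_matI) (auto simp: kron_coeff_def mult_add_less_of_less_div)

lemma kron_coeff_one [simp]:
  assumes "i < a" "j < a"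
  shows "kron_coeff a a (1\<^sub>m p) i j = (if i = j then 1\<^sub>m (p div a) else 0\<^sub>m (p div a) (p div a))"
proof (rule eq_matI)
  fix x y assume "x < dim_row (if i = j then 1\<^sub>m (p div a) else 0\<^sub>m (p div a) (p div a) :: 'a mat)"
    "y < dim_col (if i = j then 1\<^sub>m (p div a) else 0\<^sub>m (p div a) (p div a) :: 'a mat)"
  then have x: "x < p div a" and y: "y < p div a" by (simp_all split: if_splits)
  have "x * a + i = y * a + j \<longleftrightarrow> x = y \<and> i = j"
  proof
    assume eq: "x * a + i = y * a + j"
    have "x = (x * a + i) div a" "i = (x * a + i) mod a" "y = (y * a + j) div a" "j = (y * a + j) mod a"
      using assms by simp_all
    then show "x = y \<and> i = j" using eq by metis
  qed simp
  then show "kron_coeff a a (1\<^sub>m p) i j $$ (x, y)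
      = (if i = j then 1\<^sub>m (p div a) else 0\<^sub>m (p div a) (p div a) :: 'a mat) $$ (x, y)"
    using assms x y mult_add_less_of_less_div[OF x assms(1)] mult_add_less_of_less_div[OF y assms(2)]
    by (cases "i = j") (auto simp: kron_coeff_def)
qed (use assms in auto)

lemma kron_coeff_one_one [simp]: "kron_coeff (Suc 0) (Suc 0) M 0 0 = M"
  by (rule eq_matI) (simp_all add: kron_coeff_def)

lemma kron_coeff_mult:
  assumes M: "M \<in> carrier_mat nM (k * c)" and N: "N \<in> carrier_mat (k * c) mN"
    and i: "i < a" and j: "j < b" and c: "0 < c"
  shows "kron_coeff a b (M * N) i j = mat_sum (map (\<lambda>l. kron_coeff a c M i l * kron_coeff c b N l j) [0..<c])"
    (is "_ = mat_sum ?Ps")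
proof -
  have car: "\<forall>P\<in>set ?Ps. P \<in> carrier_mat (nM div a) (mN div b)" using M N c by auto
  show ?thesis
  proof (rule eq_matI)
    fix x y assume "x < dim_row (mat_sum ?Ps)" "y < dim_col (mat_sum ?Ps)"
    then have x: "x < nM div a" and y: "y < mN div b" using mat_sum_carrier[OF _ car] c by auto
    have "kron_coeff a b (M * N) i j $$ (x, y) = (\<Sum>z<k * c. M $$ (x * a + i, z) * N $$ (z, y * b + j))"
      using M N x y mult_add_less_of_less_div[OF x i] mult_add_less_of_less_div[OF y j]
      by (simp add: kron_coeff_def scalar_prod_def atLeast0LessThan)
    also have "\<dots> = (\<Sum>l<c. (kron_coeff a c M i l * kron_coeff c b N l j) $$ (x, y))"
      using M N x y c by (simp add: sum_lessThan_mult kron_coeff_def scalar_prod_def atLeast0LessThan)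
    also have "\<dots> = mat_sum ?Ps $$ (x, y)"
      using c x y car by (simp add: index_mat_sum sum_list_sum_nth atLeast0LessThan del: index_mult_mat)
    finally show "kron_coeff a b (M * N) i j $$ (x, y) = mat_sum ?Ps $$ (x, y)" .
  qed (use mat_sum_carrier[OF _ car] c M N in auto)
qed

lemma kron_coeff_kron_mult [simp]:
  assumes "dim_row B = a" "0 < dim_col B" "dim_row N = dim_col A * dim_col B" "i < a" "j < b"
  shows "kron_coeff a b (kron A B * N) i j
    = mat_sum (map (\<lambda>l. B $$ (i, l) \<cdot>\<^sub>m A * kron_coeff (dim_col B) b N l j) [0..<dim_col B])"
proof -
  have "kron_coeff a b (kron A B * N) i j = mat_sum (map (\<lambda>l. kron_coeff a (dim_col B) (kron A B) i l
      * kron_coeff (dim_col B) b N l j) [0..<dim_col B])"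
    using assms by (intro kron_coeff_mult[where k = "dim_col A"]) (auto intro: carrier_matI)
  also have "\<dots> = mat_sum (map (\<lambda>l. B $$ (i, l) \<cdot>\<^sub>m A * kron_coeff (dim_col B) b N l j) [0..<dim_col B])"
    using assms by (intro arg_cong[where f = mat_sum] map_cong) auto
  finally show ?thesis .
qed

lemma kron_coeff_mult_left_one:
  assumes "dim_col M = dim_row N" "j < b"
  shows "kron_coeff (Suc 0) b (M * N) 0 j = M * kron_coeff (Suc 0) b N 0 j"
proof -
  have "M \<in> carrier_mat (dim_row M) (dim_col M * 1)" "N \<in> carrier_mat (dim_col M * 1) (dim_col N)"
    using assms(1) by (auto intro: carrier_matI)
  from kron_coeff_mult[OF this _ assms(2), of 0 "Suc 0"] show ?thesis by simp
qed

lemma one_smult_mat [simp]: "(1 :: 'a::monoid_mult) \<cdot>\<^sub>m A = A"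
  by (rule eq_matI) auto

lemma zero_smult_mat [simp]: "(0 :: 'a::mult_zero) \<cdot>\<^sub>m A = 0\<^sub>m (dim_row A) (dim_col A)"
  by (rule eq_matI) auto

lemma uminus_zero_mat [simp]: "- 0\<^sub>m n m = (0\<^sub>m n m :: 'a::group_add mat)"
  by (rule eq_matI) auto

lemma assoc_mult_mat_dims:
  "dim_col A = dim_row B \<Longrightarrow> dim_col B = dim_row C \<Longrightarrow> A * B * C = A * (B * (C :: 'a::semiring_0 mat))"
  by (rule assoc_mult_mat[OF carrier_matI carrier_matI carrier_matI]) simp_all

lemma add_mult_distrib_mat_dims:
  "dim_row A = dim_row B \<Longrightarrow> dim_col A = dim_col B \<Longrightarrow> dim_col B = dim_row C \<Longrightarrow>
   (A + B) * C = A * C + B * (C :: 'a::semiring_0 mat)"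
  by (rule add_mult_distrib_mat[OF carrier_matI carrier_matI carrier_matI]) simp_all

lemma mult_add_distrib_mat_dims:
  "dim_row B = dim_row C \<Longrightarrow> dim_col B = dim_col C \<Longrightarrow> dim_col A = dim_row B \<Longrightarrow>
   A * (B + C) = A * B + A * (C :: 'a::semiring_0 mat)"
  by (rule mult_add_distrib_mat[OF carrier_matI carrier_matI carrier_matI]) simp_all

lemma uminus_add_mat_dims:
  "dim_row A = dim_row B \<Longrightarrow> dim_col A = dim_col B \<Longrightarrow> - (A + B) = - A + - (B :: 'a::ab_group_add mat)"
  by (rule eq_matI) auto

lemma add_uminus_cancel_mat:
  "A + - A = 0\<^sub>m (dim_row A) (dim_col A)" "- A + A = 0\<^sub>m (dim_row A) (dim_col (A :: 'a::ab_group_add mat))"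
  by (auto intro!: eq_matI)

lemma left_add_zero_mat_dims: "dim_row A = n \<Longrightarrow> dim_col A = m \<Longrightarrow> 0\<^sub>m n m + A = (A :: 'a::monoid_add mat)"
  by (rule eq_matI) auto

lemma right_add_zero_mat_dims: "dim_row A = n \<Longrightarrow> dim_col A = m \<Longrightarrow> A + 0\<^sub>m n m = (A :: 'a::monoid_add mat)"
  by (rule eq_matI) auto

lemma minus_mat_simps:
  "dim_row A = n \<Longrightarrow> dim_col A = m \<Longrightarrow> A - 0\<^sub>m n m = (A :: 'a::ab_group_add mat)"
  "dim_row A = n \<Longrightarrow> dim_col A = m \<Longrightarrow> 0\<^sub>m n m - A = - (A :: 'a::ab_group_add mat)"
  "A - A = 0\<^sub>m (dim_row A) (dim_col (A :: 'a::ab_group_add mat))"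
  by (auto intro!: eq_matI)

lemma mult_right_assoc_eq:
  "A * B = C \<Longrightarrow> dim_col A = dim_row B \<Longrightarrow> dim_col B = dim_row Z \<Longrightarrow> A * (B * Z) = C * (Z :: 'a::semiring_0 mat)"
  using assoc_mult_mat_dims by metis

section \<open>Graded maps and sign matrices\<close>

lemma graded_map_carrier: "graded_map s t k A \<Longrightarrow> A \<in> carrier_mat (length t) (length s)"
  by (simp add: graded_map_def)

lemma graded_map_zero [simp]: "n = length t \<Longrightarrow> m = length s \<Longrightarrow> graded_map s t k (0\<^sub>m n m)"
  by (simp add: graded_map_def)

lemma graded_map_one [simp]: "graded_map s s 0 (1\<^sub>m (length s))"
  by (simp add: graded_map_def)

lemma graded_map_uminus [simp]: "graded_map s t k (- A) \<longleftrightarrow> graded_map s t k (A :: 'a::ab_group_add mat)"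
  by (auto simp: graded_map_def)

lemma graded_map_mult:
  assumes A: "graded_map s t k A" and B: "graded_map t u l (B :: 'a::comm_ring_1 mat)"
  shows "graded_map s u (k + l) (B * A)"
  unfolding graded_map_def
proof (intro conjI allI impI)
  show "B * A \<in> carrier_mat (length u) (length s)" using A B by (auto simp: graded_map_def)
  fix x y assume x: "x < length u" and y: "y < length s" and nz: "(B * A) $$ (x, y) \<noteq> 0"
  then have "(\<Sum>z<length t. B $$ (x, z) * A $$ (z, y)) \<noteq> 0"
    using A B by (auto simp: graded_map_def scalar_prod_def atLeast0LessThan)
  then obtain z where z: "z < length t" "B $$ (x, z) \<noteq> 0" "A $$ (z, y) \<noteq> 0"
    by (metis (no_types, lifting) lessThan_iff mult_not_zero sum.neutral)
  then show "u ! x = s ! y + (k + l)" using A B x y by (auto simp: graded_map_def)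
qed

lemma length_shift_degs [simp]: "length (shift_degs a ds) = length ds"
  by (simp add: shift_degs_def)

lemma graded_map_shift_degs_source [simp]:
  "graded_map (shift_degs a s) t k A \<longleftrightarrow> graded_map s t (k - a) A"
  by (auto simp: graded_map_def shift_degs_def)

lemma graded_map_shift_degs_target [simp]:
  "graded_map s (shift_degs b t) k A \<longleftrightarrow> graded_map s t (k + b) A"
  by (simp add: graded_map_def shift_degs_def diff_eq_eq add.assoc)

lemma graded_map_block:
  assumes "graded_map (concat ss) (concat ts) k M" "i < length ts" "j < length ss"
  shows "graded_map (ss ! j) (ts ! i) k (block (map length ts) (map length ss) M i j)"
  unfolding graded_map_def
proof (intro conjI allI impI)
  show "block (map length ts) (map length ss) M i j \<in> carrier_mat (length (ts ! i)) (length (ss ! j))"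
    using assms by auto
  fix x y assume x: "x < length (ts ! i)" and y: "y < length (ss ! j)"
    and nz: "block (map length ts) (map length ss) M i j $$ (x, y) \<noteq> 0"
  have "offset (map length ts) i + x < length (concat ts)" "offset (map length ss) j + y < length (concat ss)"
    using offset_add_less_sum_list[of i "map length ts" x] offset_add_less_sum_list[of j "map length ss" y]
      assms x y by (simp_all add: length_concat)
  moreover have "M $$ (offset (map length ts) i + x, offset (map length ss) j + y) \<noteq> 0"
    using nz x y assms(2,3) by (simp add: index_block)
  ultimately have "concat ts ! (offset (map length ts) i + x) = concat ss ! (offset (map length ss) j + y) + k"
    using assms(1) unfolding graded_map_def by blast
  then show "ts ! i ! x = ss ! j ! y + k"
    using assms(2,3) x y by (simp add: nth_concat_offset)
qed

lemma graded_map_of_blocksI: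
  assumes "ns = map length ts" "ms = map length ss"
    and blocks: "\<forall>i<length ts. \<forall>j<length ss. graded_map (ss ! j) (ts ! i) k (B i j)"
  shows "graded_map (concat ss) (concat ts) k (of_blocks ns ms B)"
  unfolding graded_map_def
proof (intro conjI allI impI)
  show "of_blocks ns ms B \<in> carrier_mat (length (concat ts)) (length (concat ss))"
    using assms(1,2) by (intro carrier_matI) (simp_all add: length_concat)
  fix p q assume p: "p < length (concat ts)" and q: "q < length (concat ss)"
    and nz: "of_blocks ns ms B $$ (p, q) \<noteq> 0"
  obtain i x j y where ix: "locate (map length ts) p = (i, x)" and jy: "locate (map length ss) q = (j, y)"
    by fastforce
  have i: "i < length ts" "x < length (ts ! i)" "p = offset (map length ts) i + x"
    using locate_less_sum_list[OF _ ix] p by (auto simp: length_concat)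
  have j: "j < length ss" "y < length (ss ! j)" "q = offset (map length ss) j + y"
    using locate_less_sum_list[OF _ jy] q by (auto simp: length_concat)
  have "B i j $$ (x, y) \<noteq> 0"
    using nz p q ix jy assms(1,2) by (simp add: of_blocks_def length_concat)
  then show "concat ts ! p = concat ss ! q + k"
    using blocks i j by (simp add: graded_map_def nth_concat_offset)
qed

definition tensor_degs :: "int list \<Rightarrow> int list \<Rightarrow> int list" where
  "tensor_degs xs ys = concat (map (\<lambda>a. map (\<lambda>b. a + b) ys) xs)"

lemma degs_tensor_cx: "degs (tensor_cx X Y) = tensor_degs (degs X) (degs Y)"
  by (simp add: tensor_cx_def tensor_degs_def)

lemma length_tensor_degs [simp]: "length (tensor_degs xs ys) = length xs * length ys"
  by (induction xs) (simp_all add: tensor_degs_def)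

lemma tensor_degs_zero [simp]: "tensor_degs xs [0] = xs"
  by (induction xs) (simp_all add: tensor_degs_def)

lemma nth_tensor_degs:
  "x < length xs \<Longrightarrow> j < length ys \<Longrightarrow> tensor_degs xs ys ! (x * length ys + j) = xs ! x + ys ! j"
proof (induction xs arbitrary: x)
  case (Cons a xs)
  then show ?case
    by (cases x) (simp_all add: tensor_degs_def nth_append add.assoc)
qed simp

lemma graded_map_tensorI:
  assumes "dim_row M = length xs * length ys" "dim_col M = length xs' * length ys'"
    and coeff: "\<forall>i<length ys. \<forall>j<length ys'.
      graded_map xs' xs (k + ys' ! j - ys ! i) (kron_coeff (length ys) (length ys') M i j)"
  shows "graded_map (tensor_degs xs' ys') (tensor_degs xs ys) k M"
  unfolding graded_map_def
proof (intro conjI allI impI)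
  have car: "M \<in> carrier_mat (length xs * length ys) (length xs' * length ys')"
    using assms(1,2) by (rule carrier_matI)
  then show "M \<in> carrier_mat (length (tensor_degs xs ys)) (length (tensor_degs xs' ys'))" by simp
  fix p q assume p: "p < length (tensor_degs xs ys)" and q: "q < length (tensor_degs xs' ys')"
    and nz: "M $$ (p, q) \<noteq> 0"
  let ?a = "length ys" and ?b = "length ys'"
  have "0 < ?a" "0 < ?b" using p q by (auto intro: ccontr)
  then have i: "p mod ?a < ?a" "p div ?a < length xs" and j: "q mod ?b < ?b" "q div ?b < length xs'"
    using p q by (auto simp: div_less_iff_less_mult)
  have "kron_coeff ?a ?b M (p mod ?a) (q mod ?b) $$ (p div ?a, q div ?b)
      = M $$ (p div ?a * ?a + p mod ?a, q div ?b * ?b + q mod ?b)"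
    using car i j \<open>0 < ?a\<close> \<open>0 < ?b\<close> by (simp add: kron_coeff_def)
  then have "kron_coeff ?a ?b M (p mod ?a) (q mod ?b) $$ (p div ?a, q div ?b) \<noteq> 0"
    using nz by simp
  then have "xs ! (p div ?a) = xs' ! (q div ?b) + (k + ys' ! (q mod ?b) - ys ! (p mod ?a))"
    using coeff i j car unfolding graded_map_def by simp
  moreover have "tensor_degs xs ys ! p = xs ! (p div ?a) + ys ! (p mod ?a)"
    using nth_tensor_degs[OF i(2) i(1)] by simp
  moreover have "tensor_degs xs' ys' ! q = xs' ! (q div ?b) + ys' ! (q mod ?b)"
    using nth_tensor_degs[OF j(2) j(1)] by simp
  ultimately show "tensor_degs xs ys ! p = tensor_degs xs' ys' ! q + k" by simp
qed

lemma dim_sign_mat [simp]: "dim_row (sign_mat ds) = length ds" "dim_col (sign_mat ds) = length ds"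
  by (simp_all add: sign_mat_def mat_diag_def)

lemma graded_map_sign_mat [simp]: "graded_map s s 0 (sign_mat s)"
  by (auto simp: graded_map_def sign_mat_def mat_diag_def)

lemma sign_mat_mult_self: "sign_mat ds * sign_mat ds = (1\<^sub>m (length ds) :: 'a::comm_ring_1 mat)"
  unfolding sign_mat_def mat_diag_diag by (rule eq_matI) (auto simp: mat_diag_def)

lemma sign_mat_shift_degs:
  "sign_mat (shift_degs a ds) = (if even a then sign_mat ds else - sign_mat (ds :: int list))"
  by (rule eq_matI) (auto simp: sign_mat_def mat_diag_def shift_degs_def)

lemma sign_mat_comm:
  assumes "graded_map s t k (A :: 'a::comm_ring_1 mat)"
  shows "sign_mat t * A = (if even k then A * sign_mat s else - (A * sign_mat s))"
proof -
  have A: "A \<in> carrier_mat (length t) (length s)" using assms by (rule graded_map_carrier)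
  have "(if even (t ! i) then 1 else -1) * A $$ (i, j)
      = (if even k then 1 else -1) * (A $$ (i, j) * (if even (s ! j) then 1 else - 1))"
    if "i < length t" "j < length s" for i j
  proof (cases "A $$ (i, j) = 0")
    case False
    then have "t ! i = s ! j + k" using assms that unfolding graded_map_def by blast
    then show ?thesis by (auto simp: mult.commute)
  qed simp
  then show ?thesis
    unfolding sign_mat_def mat_diag_mult_left[OF A] mat_diag_mult_right[OF A]
    by (intro eq_matI) (auto simp: A)
qed

lemma sign_mat_concat:
  "sign_mat (concat dss) = of_blocks (map length dss) (map length dss)
     (\<lambda>i j. if i = j then sign_mat (dss ! i) else 0\<^sub>m (length (dss ! i)) (length (dss ! j)))"
  (is "_ = of_blocks ?ns ?ns ?B")
proof (rule eq_of_blocksI)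
  show "dim_row (sign_mat (concat dss)) = sum_list ?ns" "dim_col (sign_mat (concat dss)) = sum_list ?ns"
    by (simp_all add: length_concat)
  show "\<forall>i<length ?ns. \<forall>j<length ?ns. block ?ns ?ns (sign_mat (concat dss)) i j = ?B i j"
  proof (intro allI impI eq_matI)
    fix i j x y assume i: "i < length ?ns" and j: "j < length ?ns"
      and "x < dim_row (?B i j)" "y < dim_col (?B i j)"
    then have x: "x < ?ns ! i" and y: "y < ?ns ! j" by (simp_all split: if_splits)
    show "block ?ns ?ns (sign_mat (concat dss)) i j $$ (x, y) = ?B i j $$ (x, y)"
      using i j x y offset_add_less_sum_list[OF i x] offset_add_less_sum_list[OF j y]
        offset_eq_offset_iff[OF i x j y]
      by (auto simp: index_block sign_mat_def mat_diag_def nth_concat_offset length_concat)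
  qed simp_all
qed

section \<open>S-complexes in block form\<close>

lemma O_minus1_parts:
  "degs (O_minus1 :: 'a::comm_ring_1 cxchi) = [-2, -1, 0]"
  "dif (O_minus1 :: 'a::comm_ring_1 cxchi) = mat_unit 3 3 1 2"
  "chi (O_minus1 :: 'a::comm_ring_1 cxchi) = mat_unit 3 3 1 0"
proof -
  show "degs (O_minus1 :: 'a cxchi) = [-2, -1, 0]"
    by (simp add: O_minus1_def S_tot_def Let_def shift_degs_def)
  have "i = 0 \<or> i = 1 \<or> i = 2" if "i < 3" for i :: nat using that by auto
  then show "dif (O_minus1 :: 'a cxchi) = mat_unit 3 3 1 2" "chi (O_minus1 :: 'a cxchi) = mat_unit 3 3 1 0"
    by (auto simp: O_minus1_def S_tot_def Let_def block3_def row_blocks_def append_rows_def intro!: eq_matI)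
qed

lemma degs_tensor_O_minus1: "degs (tensor_cx Y O_minus1) = tensor_degs (degs Y) [-2, -1, 0]"
  by (simp add: degs_tensor_cx O_minus1_parts)

lemma dif_tensor_O_minus1:
  "dif (tensor_cx Y O_minus1) = kron (dif Y) (1\<^sub>m 3) + kron (sign_mat (degs Y)) (mat_unit 3 3 1 2)"
  by (simp add: tensor_cx_def O_minus1_parts numeral_3_eq_3)

lemma chi_tensor_O_minus1:
  "chi (tensor_cx Y O_minus1) = kron (chi Y) (1\<^sub>m 3) + kron (sign_mat (degs Y)) (mat_unit 3 3 1 0)"
  by (simp add: tensor_cx_def O_minus1_parts numeral_3_eq_3)

locale S_complex =
  fixes dc dr :: "int list" and d v \<delta>1 \<delta>2 r :: "'a::comm_ring_1 mat"
  assumes S_complex: "is_S_complex dc dr d v \<delta>1 \<delta>2 r"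
begin

abbreviation "nc \<equiv> length dc"
abbreviation "nr \<equiv> length dr"
abbreviation "X \<equiv> S_tot dc dr d v \<delta>1 \<delta>2 r"
abbreviation "S \<equiv> neg_susp dc dr d v \<delta>1 \<delta>2 r"
abbreviation "T \<equiv> tensor_cx X O_minus1"
abbreviation "xs \<equiv> [nc, nc, nr]"
abbreviation "ss \<equiv> [nc, nr, nc, nr, nr]"
abbreviation "eC \<equiv> sign_mat dc :: 'a mat"
abbreviation "eR \<equiv> sign_mat dr :: 'a mat"

lemma dims_data [simp]:
  "dim_row d = nc" "dim_col d = nc" "dim_row v = nc" "dim_col v = nc"
  "dim_row \<delta>1 = nr" "dim_col \<delta>1 = nc" "dim_row \<delta>2 = nc" "dim_col \<delta>2 = nr"
  "dim_row r = nr" "dim_col r = nr"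
proof -
  have "d \<in> carrier_mat nc nc" "v \<in> carrier_mat nc nc" "\<delta>2 \<in> carrier_mat nc nr"
    "\<delta>1 \<in> carrier_mat nr nc" "r \<in> carrier_mat nr nr"
    using S_complex unfolding is_S_complex_def Let_def by blast+
  then show "dim_row d = nc" "dim_col d = nc" "dim_row v = nc" "dim_col v = nc"
    "dim_row \<delta>1 = nr" "dim_col \<delta>1 = nc" "dim_row \<delta>2 = nc" "dim_col \<delta>2 = nr"
    "dim_row r = nr" "dim_col r = nr" by auto
qed

lemma S_complex_dif:
  "graded_map (degs X) (degs X) (-1) (dif X)" "dif X * dif X = 0\<^sub>m (length (degs X)) (length (degs X))"
  using S_complex unfolding is_S_complex_def Let_def by blast+

lemma degs_X: "degs X = concat [dc, shift_degs (-1) dc, dr]"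
  by (simp add: S_tot_def Let_def)

lemma degs_S: "degs S = concat [shift_degs 2 dc, shift_degs 2 dr, shift_degs 1 dc, shift_degs 1 dr, dr]"
  by (simp add: neg_susp_def S_tot_def Let_def shift_degs_def)

lemma length_degs [simp]:
  "length (degs X) = nc + (nc + nr)" "length (degs S) = nc + (nr + (nc + (nr + nr)))"
  "length (degs T) = (nc + (nc + nr)) * 3"
  by (simp_all add: degs_X degs_S degs_tensor_O_minus1)

lemma dif_X: "dif X = sparse_block_mat xs xs
    [((0, 0), d), ((1, 0), v), ((1, 1), - d), ((1, 2), \<delta>2), ((2, 0), \<delta>1), ((2, 2), r)]"
  by (rule eq_of_blocksI; (simp only: All_less_expand)?;
      simp add: S_tot_def Let_def block3_def row_blocks_def append_rows_def block_def sparse_blocks_def)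

lemma chi_X: "chi X = sparse_block_mat xs xs [((1, 0), 1\<^sub>m nc)]"
  by (rule eq_of_blocksI; (simp only: All_less_expand)?;
      simp add: S_tot_def Let_def block3_def row_blocks_def append_rows_def block_def sparse_blocks_def)

lemma sign_X: "sign_mat (degs X) = sparse_block_mat xs xs [((0, 0), eC), ((1, 1), - eC), ((2, 2), eR)]"
  unfolding degs_X sign_mat_concat
  by (rule eq_of_blocksI; (simp only: All_less_expand)?; simp add: sparse_blocks_def sign_mat_shift_degs)

lemma dif_S: "dif S = sparse_block_mat ss ss
    [((0, 0), d), ((1, 0), \<delta>1), ((1, 1), r), ((2, 0), v), ((2, 1), \<delta>2), ((2, 2), - d),
     ((3, 2), - \<delta>1), ((3, 3), - r), ((3, 4), 1\<^sub>m nr), ((4, 0), \<delta>1 * v), ((4, 1), \<delta>1 * \<delta>2), ((4, 4), r)]"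
  by (rule eq_of_blocksI; (simp only: All_less_expand)?;
      simp add: neg_susp_def S_tot_def Let_def block3_def row_blocks_def append_rows_def block_def
        sparse_blocks_def)

lemma chi_S: "chi S = sparse_block_mat ss ss [((2, 0), 1\<^sub>m nc), ((3, 1), 1\<^sub>m nr)]"
  by (rule eq_of_blocksI; (simp only: All_less_expand)?;
      simp add: neg_susp_def S_tot_def Let_def block3_def row_blocks_def append_rows_def block_def
        sparse_blocks_def)

lemma graded_components:
  "graded_map dc dc (-1) d" "graded_map dc dc (-2) v" "graded_map dr dc (-2) \<delta>2"
  "graded_map dc dr (-1) \<delta>1" "graded_map dr dr (-1) r"
proof -
  have "graded_map ([dc, shift_degs (-1) dc, dr] ! j) ([dc, shift_degs (-1) dc, dr] ! i) (-1)
      (block xs xs (dif X) i j)" if "i < 3" "j < 3" for i j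
    using graded_map_block[OF S_complex_dif(1)[unfolded degs_X], of i j] that by simp
  from this[of 0 0] this[of 1 0] this[of 1 2] this[of 2 0] this[of 2 2]
  show "graded_map dc dc (-1) d" "graded_map dc dc (-2) v" "graded_map dr dc (-2) \<delta>2"
    "graded_map dc dr (-1) \<delta>1" "graded_map dr dr (-1) r"
    by (simp_all add: dif_X sparse_blocks_def)
qed

lemma graded_delta1_sign: "graded_map dc dr (-1) (\<delta>1 * eC)"
  using graded_map_mult[OF graded_map_sign_mat graded_components(4)] by simp

lemma sign_relations:
  "eC * d = - (d * eC)" "eC * v = v * eC" "eC * \<delta>2 = \<delta>2 * eR" "eR * \<delta>1 = - (\<delta>1 * eC)"
  "eR * r = - (r * eR)" "eC * eC = 1\<^sub>m nc" "eR * eR = 1\<^sub>m nr"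
  using sign_mat_comm[OF graded_components(1)] sign_mat_comm[OF graded_components(2)]
    sign_mat_comm[OF graded_components(3)] sign_mat_comm[OF graded_components(4)]
    sign_mat_comm[OF graded_components(5)] sign_mat_mult_self[of dc] sign_mat_mult_self[of dr]
  by simp_all

lemma dif_relations: "d * v = v * d + \<delta>2 * \<delta>1" "d * \<delta>2 = \<delta>2 * r" "r * \<delta>1 = - (\<delta>1 * d)"
proof -
  have "block xs xs (dif X * dif X) i j = block xs xs (0\<^sub>m (sum_list xs) (sum_list xs)) i j" for i j
    using S_complex_dif(2) by simp
  from this[of 1 0] this[of 1 2] this[of 2 0]
  have e: "v * d + (- (d * v) + \<delta>2 * \<delta>1) = 0\<^sub>m nc nc" "- (d * \<delta>2) + \<delta>2 * r = 0\<^sub>m nc nr"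
    "\<delta>1 * d + r * \<delta>1 = 0\<^sub>m nr nc"
    by (simp_all add: dif_X sparse_blocks_def left_add_zero_mat_dims)
  show "d * v = v * d + \<delta>2 * \<delta>1"
  proof (rule eq_matI)
    fix i j assume "i < dim_row (v * d + \<delta>2 * \<delta>1)" "j < dim_col (v * d + \<delta>2 * \<delta>1)"
    then have ij: "i < nc" "j < nc" by simp_all
    have "(v * d) $$ (i, j) + (- (d * v) $$ (i, j) + (\<delta>2 * \<delta>1) $$ (i, j)) = 0"
      using arg_cong[OF e(1), of "\<lambda>M. M $$ (i, j)"] ij by (simp del: index_mult_mat(1))
    then show "(d * v) $$ (i, j) = (v * d + \<delta>2 * \<delta>1) $$ (i, j)"
      using ij by (simp add: algebra_simps del: index_mult_mat(1))
  qed simp_all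
  show "d * \<delta>2 = \<delta>2 * r"
  proof (rule eq_matI)
    fix i j assume "i < dim_row (\<delta>2 * r)" "j < dim_col (\<delta>2 * r)"
    then have ij: "i < nc" "j < nr" by simp_all
    have "- (d * \<delta>2) $$ (i, j) + (\<delta>2 * r) $$ (i, j) = 0"
      using arg_cong[OF e(2), of "\<lambda>M. M $$ (i, j)"] ij by (simp del: index_mult_mat(1))
    then show "(d * \<delta>2) $$ (i, j) = (\<delta>2 * r) $$ (i, j)"
      using ij by (simp add: algebra_simps del: index_mult_mat(1))
  qed simp_all
  show "r * \<delta>1 = - (\<delta>1 * d)"
  proof (rule eq_matI)
    fix i j assume "i < dim_row (- (\<delta>1 * d))" "j < dim_col (- (\<delta>1 * d))"
    then have ij: "i < nr" "j < nc" by simp_all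
    have "(\<delta>1 * d) $$ (i, j) + (r * \<delta>1) $$ (i, j) = 0"
      using arg_cong[OF e(3), of "\<lambda>M. M $$ (i, j)"] ij by (simp del: index_mult_mat(1))
    then show "(r * \<delta>1) $$ (i, j) = (- (\<delta>1 * d)) $$ (i, j)"
      using ij by (simp add: add_eq_0_iff2 add.commute del: index_mult_mat(1))
  qed simp_all
qed

lemmas relations = dif_relations sign_relations

text \<open>The simplifier associates products to the right, so every relation is also needed with an
  arbitrary right factor appended.\<close>

lemmas relations_right_assoc = relations[THEN mult_right_assoc_eq]

lemmas block_algebra_simps = assoc_mult_mat_dims add_mult_distrib_mat_dims mult_add_distrib_mat_dims
  uminus_add_mat_dims add_uminus_cancel_mat left_add_zero_mat_dims right_add_zero_mat_dims
  minus_mat_simps relations relations_right_assoc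

section \<open>The homotopy equivalence\<close>

text \<open>The block rows and columns of \<open>X\<close> are \<open>C, C[-1], R\<close>, those of \<open>S\<close> are \<open>C[2], R[2], C[1], R[1], R\<close>.
  \<open>Fj\<close> and \<open>Gj\<close> are the components of \<open>F\<close> and \<open>G\<close> along the basis vector of \<open>O~(-1)\<close> of degree
  \<open>j - 2\<close>; \<open>K0\<close> and \<open>K1\<close> map the components of degrees \<open>-2\<close> and \<open>-1\<close> to that of degree \<open>0\<close>.\<close>

definition "F0 = sparse_block_mat xs ss [((0, 0), 1\<^sub>m nc), ((1, 2), 1\<^sub>m nc), ((2, 1), 1\<^sub>m nr)]"
definition "F1 = sparse_block_mat xs ss [((0, 2), eC), ((2, 3), eR)]"
definition "F2 = sparse_block_mat xs ss [((0, 0), v), ((0, 1), \<delta>2), ((1, 2), v), ((1, 3), \<delta>2), ((2, 4), 1\<^sub>m nr)]"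
definition "G0 = sparse_block_mat ss xs [((0, 0), 1\<^sub>m nc), ((1, 2), 1\<^sub>m nr), ((2, 1), 1\<^sub>m nc), ((4, 1), \<delta>1)]"
definition "G1 = sparse_block_mat ss xs [((3, 2), eR), ((4, 0), - (\<delta>1 * eC))]"
definition "G2 = sparse_block_mat ss xs [((4, 2), 1\<^sub>m nr)]"
definition "K0 = sparse_block_mat xs xs [((0, 1), 1\<^sub>m nc)]"
definition "K1 = sparse_block_mat xs xs [((0, 0), - eC), ((1, 1), eC)]"

definition "F = kron F0 (mat_unit 3 1 0 0) + kron F1 (mat_unit 3 1 1 0) + kron F2 (mat_unit 3 1 2 0)"
definition "G = kron G0 (mat_unit 1 3 0 0) + kron G1 (mat_unit 1 3 0 1) + kron G2 (mat_unit 1 3 0 2)"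
definition "K = kron K0 (mat_unit 3 3 2 0) + kron K1 (mat_unit 3 3 2 1)"

lemmas block_forms = dif_X chi_X sign_X dif_S chi_S F0_def F1_def F2_def G0_def G1_def G2_def K0_def K1_def

lemma dim_block_forms [simp]:
  "dim_row (dif X) = sum_list xs" "dim_col (dif X) = sum_list xs"
  "dim_row (chi X) = sum_list xs" "dim_col (chi X) = sum_list xs"
  "dim_row (dif S) = sum_list ss" "dim_col (dif S) = sum_list ss"
  "dim_row (chi S) = sum_list ss" "dim_col (chi S) = sum_list ss"
  "dim_row F0 = sum_list xs" "dim_col F0 = sum_list ss" "dim_row F1 = sum_list xs" "dim_col F1 = sum_list ss"
  "dim_row F2 = sum_list xs" "dim_col F2 = sum_list ss" "dim_row G0 = sum_list ss" "dim_col G0 = sum_list xs"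
  "dim_row G1 = sum_list ss" "dim_col G1 = sum_list xs" "dim_row G2 = sum_list ss" "dim_col G2 = sum_list xs"
  "dim_row K0 = sum_list xs" "dim_col K0 = sum_list xs" "dim_row K1 = sum_list xs" "dim_col K1 = sum_list xs"
  by (simp_all add: block_forms)

lemma dif_comm_F: "dif T * F = F * dif S"
  apply (rule kron_coeff_ext[where a = 3 and b = 1])
  apply (simp_all only: All_less_expand)
  apply (simp_all add: F_def dif_tensor_O_minus1 block_algebra_simps upt_conv_Cons)
  apply (intro conjI; rule block_ext[where ns = xs and ms = ss])
  apply (simp_all only: All_less_expand)
  apply (simp_all add: block_forms sparse_blocks_def block_algebra_simps)
  done

lemma chi_comm_F: "chi T * F = F * chi S"
  apply (rule kron_coeff_ext[where a = 3 and b = 1])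
  apply (simp_all only: All_less_expand)
  apply (simp_all add: F_def chi_tensor_O_minus1 block_algebra_simps upt_conv_Cons)
  apply (intro conjI; rule block_ext[where ns = xs and ms = ss])
  apply (simp_all only: All_less_expand)
  apply (simp_all add: block_forms sparse_blocks_def block_algebra_simps)
  done

lemma dif_comm_G: "dif S * G = G * dif T"
  apply (rule kron_coeff_ext[where a = 1 and b = 3])
  apply (simp_all only: All_less_expand)
  apply (simp_all add: G_def dif_tensor_O_minus1 block_algebra_simps upt_conv_Cons
      kron_coeff_mult_left_one[of "dif S"])
  apply (intro conjI; rule block_ext[where ns = ss and ms = xs])
  apply (simp_all only: All_less_expand)
  apply (simp_all add: block_forms sparse_blocks_def block_algebra_simps)
  done

lemma chi_comm_G: "chi S * G = G * chi T"
  apply (rule kron_coeff_ext[where a = 1 and b = 3])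
  apply (simp_all only: All_less_expand)
  apply (simp_all add: G_def chi_tensor_O_minus1 block_algebra_simps upt_conv_Cons
      kron_coeff_mult_left_one[of "chi S"])
  apply (intro conjI; rule block_ext[where ns = ss and ms = xs])
  apply (simp_all only: All_less_expand)
  apply (simp_all add: block_forms sparse_blocks_def block_algebra_simps)
  done

lemma G_mult_F: "G * F = 1\<^sub>m (length (degs S))"
  apply (rule kron_coeff_ext[where a = 1 and b = 1])
  apply (simp_all only: All_less_expand)
  apply (simp_all add: G_def F_def block_algebra_simps upt_conv_Cons del: kron_coeff_one_one)
  apply (rule block_ext[where ns = ss and ms = ss])
  apply (simp_all only: All_less_expand)
  apply (simp_all add: block_forms sparse_blocks_def block_algebra_simps)
  done

lemma chi_anticomm_K: "chi T * K + K * chi T = 0\<^sub>m (length (degs T)) (length (degs T))"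
  apply (rule kron_coeff_ext[where a = 3 and b = 3])
  apply (simp_all only: All_less_expand)
  apply (simp_all add: K_def chi_tensor_O_minus1 block_algebra_simps upt_conv_Cons)
  apply (intro conjI; rule block_ext[where ns = xs and ms = xs])
  apply (simp_all only: All_less_expand)
  apply (simp_all add: block_forms sparse_blocks_def block_algebra_simps)
  done

lemma dif_K_homotopy: "dif T * K + K * dif T = F * G - 1\<^sub>m (length (degs T))"
  apply (rule kron_coeff_ext[where a = 3 and b = 3])
  apply (simp_all only: All_less_expand)
  apply (simp_all add: K_def F_def G_def dif_tensor_O_minus1 block_algebra_simps upt_conv_Cons)
  apply (intro conjI; rule block_ext[where ns = xs and ms = xs])
  apply (simp_all only: All_less_expand)
  apply (simp_all add: block_forms sparse_blocks_def block_algebra_simps)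
  done

lemmas graded_entries = graded_components graded_delta1_sign

lemma graded_F: "graded_map (degs S) (degs T) 0 F"
proof -
  have "graded_map (degs S) (degs X) 2 F0" "graded_map (degs S) (degs X) 1 F1"
    "graded_map (degs S) (degs X) 0 F2"
    unfolding degs_X degs_S F0_def F1_def F2_def
    by (rule graded_map_of_blocksI; (simp only: All_less_expand)?; simp add: sparse_blocks_def graded_entries)+
  then have "graded_map (tensor_degs (degs S) [0]) (tensor_degs (degs X) [-2, -1, 0]) 0 F"
    by (intro graded_map_tensorI; (simp only: All_less_expand)?;
        simp add: F_def left_add_zero_mat_dims right_add_zero_mat_dims)
  then show ?thesis by (simp add: degs_tensor_O_minus1)
qed

lemma graded_G: "graded_map (degs T) (degs S) 0 G"
proof -
  have "graded_map (degs X) (degs S) (-2) G0" "graded_map (degs X) (degs S) (-1) G1"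
    "graded_map (degs X) (degs S) 0 G2"
    unfolding degs_X degs_S G0_def G1_def G2_def
    by (rule graded_map_of_blocksI; (simp only: All_less_expand)?; simp add: sparse_blocks_def graded_entries)+
  then have "graded_map (tensor_degs (degs X) [-2, -1, 0]) (tensor_degs (degs S) [0]) 0 G"
    by (intro graded_map_tensorI; (simp only: All_less_expand)?;
        simp add: G_def left_add_zero_mat_dims right_add_zero_mat_dims)
  then show ?thesis by (simp add: degs_tensor_O_minus1)
qed

lemma graded_K: "graded_map (degs T) (degs T) 1 K"
proof -
  have "graded_map (degs X) (degs X) (-1) K0" "graded_map (degs X) (degs X) 0 K1"
    unfolding degs_X K0_def K1_def
    by (rule graded_map_of_blocksI; (simp only: All_less_expand)?; simp add: sparse_blocks_def graded_entries)+
  then have "graded_map (tensor_degs (degs X) [-2, -1, 0]) (tensor_degs (degs X) [-2, -1, 0]) 1 K"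
    by (intro graded_map_tensorI; (simp only: All_less_expand)?;
        simp add: K_def left_add_zero_mat_dims right_add_zero_mat_dims)
  then show ?thesis by (simp add: degs_tensor_O_minus1)
qed

lemma neg_susp_htpy_equiv: "S_htpy_equiv S T"
  unfolding S_htpy_equiv_def
proof (intro exI conjI)
  show "S_morphism S T F" unfolding S_morphism_def using graded_F dif_comm_F chi_comm_F by simp
  show "S_morphism T S G" unfolding S_morphism_def using graded_G dif_comm_G chi_comm_G by simp
  show "S_homotopy S S (G * F) (1\<^sub>m (length (degs S))) (0\<^sub>m (length (degs S)) (length (degs S)))"
    unfolding S_homotopy_def using G_mult_F by (simp add: minus_mat_simps left_add_zero_mat_dims)
  show "S_homotopy T T (F * G) (1\<^sub>m (length (degs T))) K"
    unfolding S_homotopy_def using graded_K chi_anticomm_K dif_K_homotopy by simp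
qed

end

theorem proposition2p6:
  fixes dc dr :: "int list" and d v \<delta>1 \<delta>2 r :: "'a::comm_ring_1 mat"
  assumes "is_S_complex dc dr d v \<delta>1 \<delta>2 r"
  shows "S_htpy_equiv (neg_susp dc dr d v \<delta>1 \<delta>2 r)
                      (tensor_cx (S_tot dc dr d v \<delta>1 \<delta>2 r) O_minus1)"
  using assms by (intro S_complex.neg_susp_htpy_equiv S_complex.intro)

end
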